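(* Let $t\in\mathbb{R}$ and $0\le\beta\le1$. Define polynomials $B^*_n(t,\beta;x)$ by $$\sum_{n=0}^\infty B^*_n(t,\beta;x)\frac{z^n}{n!}=\left(\frac{z}{\beta(e^z-1)+(1-\beta)z}\right)^te^{xz}$$ for $z$ in a neighborhood of $0$. Then for every $n\in\mathbb{N}_0$, $$B^*_n(t,\beta;0)=\sum_{m=0}^n\binom{-t}{m}\beta^m\sum_{k=0}^m\binom mk(-1)^{m-k}\frac{S(n+k,k)}{\binom{n+k}{n}}.$$ *)

theory Defs
  imports "HOL-Analysis.Analysis" "HOL-Combinatorics.Stirling"
begin

end

theory Submission
  imports Defs
begin

text \<open>
  Write \<open>\<beta>(e\<^sup>z - 1) + (1 - \<beta>)z = z(1 + W(z))\<close> with \<open>W(z) = \<beta>((e\<^sup>z - 1)/z - 1)\<close>, a power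
  series without constant term whose coefficients are nonnegative for \<open>\<beta> \<ge> 0\<close>. At \<open>x = 0\<close> the
  generating function is \<open>(1 + W)\<^sup>-\<^sup>t = \<Sum>\<^sub>m (-t gchoose m) W\<^sup>m\<close>; nonnegativity makes this double
  series absolutely convergent near 0, so \<open>B\<^sub>n(0)/n!\<close> is the \<open>n\<close>-th coefficient of the formal
  composition. Expanding \<open>W\<^sup>m\<close> binomially in powers of \<open>(e\<^sup>z - 1)/z\<close> and using
  \<open>[z\<^sup>n] ((e\<^sup>z - 1)/z)\<^sup>k = k! S(n+k,k)/(n+k)!\<close> gives the formula.
\<close>

lemma fps_nth_exp_minus_one_power:
  "fps_nth ((fps_exp (1::'a::field_char_0) - 1) ^ k) n = fact k * of_nat (Stirling n k) / fact n"
proof (induction n arbitrary: k)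
  case 0
  then show ?case by (cases k) (simp_all add: fps_power_zeroth)
next
  case (Suc n)
  define E :: "'a fps" where "E = fps_exp 1 - 1"
  show ?case
  proof (cases k)
    case 0
    then show ?thesis by simp
  next
    case (Suc j)
    have "fps_deriv (E ^ Suc j) = fps_const (of_nat (Suc j)) * (E ^ Suc j + E ^ j)"
      unfolding fps_deriv_power' E_def fps_of_nat[symmetric] by (simp add: algebra_simps)
    then have "fps_nth (fps_deriv (E ^ Suc j)) n
             = of_nat (Suc j) * (fps_nth (E ^ Suc j) n + fps_nth (E ^ j) n)"
      by simp
    then have "of_nat (Suc n) * fps_nth (E ^ Suc j) (Suc n)
             = of_nat (Suc j) * (fps_nth (E ^ Suc j) n + fps_nth (E ^ j) n)"
      by (simp only: fps_deriv_nth Suc_eq_plus1)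
    then have "fps_nth (E ^ Suc j) (Suc n)
             = of_nat (Suc j) * (fps_nth (E ^ Suc j) n + fps_nth (E ^ j) n) / of_nat (Suc n)"
      by (simp add: field_simps del: of_nat_Suc)
    also have "\<dots> = fact (Suc j) * of_nat (Stirling (Suc n) (Suc j)) / fact (Suc n)"
      unfolding Suc.IH[folded E_def] by (simp add: field_simps)
    finally show ?thesis using Suc E_def by simp
  qed
qed

definition fps_expm1_over_X :: "'a :: field fps" where
  "fps_expm1_over_X = fps_shift 1 (fps_exp 1 - 1)"

lemma fps_expm1_over_X_times_X: "fps_expm1_over_X * fps_X = fps_exp 1 - 1"
  by (intro fps_ext) (auto simp: fps_expm1_over_X_def)

lemma fps_nth_expm1_over_X_power:
  "fact n * fps_nth (fps_expm1_over_X ^ k) n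
     = (of_nat (Stirling (n + k) k) / of_nat ((n + k) choose n) :: 'a :: field_char_0)"
proof -
  have "(fps_exp 1 - 1) ^ k = fps_expm1_over_X ^ k * (fps_X ^ k :: 'a fps)"
    by (metis fps_expm1_over_X_times_X power_mult_distrib)
  then have "fps_nth (fps_expm1_over_X ^ k) n = fps_nth ((fps_exp (1::'a) - 1) ^ k) (n + k)"
    by (simp add: fps_X_power_mult_right_nth)
  also have "\<dots> = fact k * of_nat (Stirling (n + k) k) / fact (n + k)"
    by (rule fps_nth_exp_minus_one_power)
  finally show ?thesis
    by (simp add: binomial_fact field_simps)
qed

definition fps_denominator_excess :: "'a :: field \<Rightarrow> 'a fps" where
  "fps_denominator_excess \<beta> = fps_const \<beta> * (fps_expm1_over_X - 1)"

lemma fps_nth_denominator_excess: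
  "fps_nth (fps_denominator_excess \<beta>) n = (if n = 0 then 0 else \<beta> / fact (Suc n))"
  by (simp add: fps_denominator_excess_def fps_expm1_over_X_def algebra_simps)

lemma fps_nth_denominator_excess_power:
  "fps_nth (fps_denominator_excess \<beta> ^ m) n
     = \<beta> ^ m * (\<Sum>k=0..m. of_nat (m choose k) * (-1) ^ (m - k) * fps_nth (fps_expm1_over_X ^ k) n)"
proof -
  have "(fps_expm1_over_X - 1 :: 'a fps) ^ m
      = (\<Sum>k\<le>m. of_nat (m choose k) * fps_expm1_over_X ^ k * (-1) ^ (m - k))"
    using binomial_ring[of fps_expm1_over_X "-1 :: 'a fps" m] by simp
  also have "\<dots> = (\<Sum>k=0..m. fps_const (of_nat (m choose k) * (-1) ^ (m - k)) * fps_expm1_over_X ^ k)"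
  proof -
    have "(-1 :: 'a fps) ^ j = fps_const ((-1) ^ j)" for j
      by (induction j) (simp_all add: fps_const_mult[symmetric] del: fps_const_mult)
    then show ?thesis
      unfolding atLeast0AtMost by (intro sum.cong refl) (simp add: fps_of_nat[symmetric] mult_ac)
  qed
  finally have "fps_nth ((fps_expm1_over_X - 1 :: 'a fps) ^ m) n
      = (\<Sum>k=0..m. of_nat (m choose k) * (-1) ^ (m - k) * fps_nth (fps_expm1_over_X ^ k) n)"
    by (simp only: fps_sum_nth fps_mult_left_const_nth)
  moreover have "fps_denominator_excess \<beta> ^ m = fps_const (\<beta> ^ m) * (fps_expm1_over_X - 1) ^ m"
    by (simp add: fps_denominator_excess_def power_mult_distrib)
  ultimately show ?thesis
    by simp
qed

lemma fps_conv_radius_expm1_over_X: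
  "fps_conv_radius (fps_expm1_over_X :: 'a :: {banach, real_normed_field} fps) = \<infinity>"
  using fps_conv_radius_diff[of "fps_exp (1::'a)" 1] by (simp add: fps_expm1_over_X_def)

lemma fps_conv_radius_denominator_excess:
  "fps_conv_radius (fps_denominator_excess \<beta> :: 'a :: {banach, real_normed_field} fps) = \<infinity>"
  using fps_conv_radius_diff[of "fps_expm1_over_X :: 'a fps" 1]
        fps_conv_radius_mult[of "fps_const \<beta>" "fps_expm1_over_X - 1 :: 'a fps"]
  by (simp add: fps_denominator_excess_def fps_conv_radius_expm1_over_X)

lemma eval_fps_expm1_over_X:
  fixes z :: "'a :: {banach, real_normed_field}"
  assumes "z \<noteq> 0"
  shows "eval_fps fps_expm1_over_X z = (exp z - 1) / z"
proof -
  have "fps_conv_radius (fps_exp (1::'a) - 1) = \<infinity>"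
    using fps_conv_radius_diff[of "fps_exp (1::'a)" 1] by simp
  moreover have "subdegree (fps_exp (1::'a) - 1) \<ge> 1"
    by (rule subdegree_geI) auto
  ultimately show ?thesis
    using assms by (simp add: fps_expm1_over_X_def eval_fps_shift eval_fps_diff)
qed

lemma eval_fps_denominator_excess:
  fixes z :: "'a :: {banach, real_normed_field}"
  assumes "z \<noteq> 0"
  shows "eval_fps (fps_denominator_excess \<beta>) z = \<beta> * ((exp z - 1) / z - 1)"
  using assms fps_conv_radius_diff[of "fps_expm1_over_X :: 'a fps" 1]
  by (simp add: fps_denominator_excess_def eval_fps_mult eval_fps_diff
                fps_conv_radius_expm1_over_X eval_fps_expm1_over_X)

lemma powser_eq_zero:
  fixes a :: "nat \<Rightarrow> 'a :: {real_normed_field, banach}"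
  assumes "\<rho> > 0" and sums_zero: "\<And>z. z \<noteq> 0 \<Longrightarrow> norm z < \<rho> \<Longrightarrow> (\<lambda>k. a k * z ^ k) sums 0"
  shows "a n = 0"
proof (induction n rule: less_induct)
  case (less n)
  have "(\<lambda>k. a (k + n) * z ^ k) sums 0" if "z \<noteq> 0" "norm z < \<rho>" for z
  proof -
    have "(\<lambda>k. a (k + n) * z ^ (k + n)) sums (0 - (\<Sum>k<n. a k * z ^ k))"
      using sums_split_initial_segment[OF sums_zero[OF that]] .
    then have "(\<lambda>k. a (k + n) * z ^ (k + n) / z ^ n) sums 0"
      using less sums_divide[of _ 0 "z ^ n"] by simp
    then show ?thesis
      using that by (simp add: power_add)
  qed
  then have "((\<lambda>_. 0) \<longlongrightarrow> a n) (at (0 :: 'a))"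
    using powser_limit_0_strong[OF \<open>\<rho> > 0\<close>, of "\<lambda>k. a (k + n)" "\<lambda>_. 0"] by simp
  then show "a n = 0"
    by (simp add: tendsto_const_iff)
qed

lemma fps_nth_power_nonneg:
  fixes W :: "'a :: linordered_idom fps"
  assumes "\<And>n. fps_nth W n \<ge> 0"
  shows "fps_nth (W ^ m) n \<ge> 0"
proof (induction m arbitrary: n)
  case (Suc m)
  then show ?case
    unfolding power_Suc fps_mult_nth using assms by (intro sum_nonneg mult_nonneg_nonneg) auto
qed simp

text \<open>
  Nonnegativity of the coefficients of \<open>W\<close> makes the double series
  \<open>\<Sum>\<^sub>m\<^sub>,\<^sub>n C\<^sub>m [z\<^sup>n]W\<^sup>m z\<^sup>n\<close> absolutely convergent, so it may be summed in either order.
\<close>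

lemma sums_fps_compose_nonneg:
  fixes C W :: "real fps" and z :: real
  assumes W0: "fps_nth W 0 = 0" and W_nonneg: "\<And>n. fps_nth W n \<ge> 0"
    and radW: "ereal \<bar>z\<bar> < fps_conv_radius W"
    and radC: "ereal (eval_fps W \<bar>z\<bar>) < fps_conv_radius C"
  shows "(\<lambda>n. fps_nth (C oo W) n * z ^ n) sums eval_fps C (eval_fps W z)"
proof -
  define w where "w = eval_fps W \<bar>z\<bar>"
  define a where "a = (\<lambda>(m, n). fps_nth C m * fps_nth (W ^ m) n * z ^ n)"
  have power_nonneg: "fps_nth (W ^ m) n \<ge> 0" for m n
    using W_nonneg by (rule fps_nth_power_nonneg)
  have row_sums: "(\<lambda>n. fps_nth (W ^ m) n * y ^ n) sums (eval_fps W y ^ m)"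
    if "\<bar>y\<bar> \<le> \<bar>z\<bar>" for y m
  proof -
    have y: "ereal (norm y) < fps_conv_radius W"
      using that by (intro le_less_trans[OF _ radW]) simp
    then have "(\<lambda>n. fps_nth (W ^ m) n * y ^ n) sums eval_fps (W ^ m) y"
      by (intro sums_eval_fps less_le_trans[OF y fps_conv_radius_power])
    then show ?thesis
      by (simp add: eval_fps_power[OF y])
  qed
  have "w \<ge> 0"
    using sums_le[OF _ sums_zero row_sums[of "\<bar>z\<bar>" 1]] W_nonneg by (simp add: w_def)
  have norm_rows: "((\<lambda>n. norm (a (m, n))) has_sum (\<bar>fps_nth C m\<bar> * w ^ m)) UNIV" for m
    using sums_mult[OF row_sums[of "\<bar>z\<bar>" m], of "\<bar>fps_nth C m\<bar>"] power_nonneg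
    by (intro sums_nonneg_imp_has_sum)
      (auto simp: a_def w_def abs_mult power_abs mult.assoc)
  have "summable (\<lambda>m. norm (fps_nth C m * w ^ m))"
    using radC \<open>w \<ge> 0\<close> by (intro norm_summable_fps) (simp add: w_def)
  then have "(\<lambda>m. \<bar>fps_nth C m\<bar> * w ^ m) summable_on UNIV"
    using \<open>w \<ge> 0\<close> by (intro summable_nonneg_imp_summable_on) (auto simp: abs_mult)
  then have "(\<lambda>x. norm (a x)) summable_on UNIV \<times> UNIV"
    using norm_rows by (intro summable_on_SigmaI[where B = "\<lambda>_. UNIV"]) auto
  then obtain S where S: "(a has_sum S) (UNIV \<times> UNIV)"
    using abs_summable_summable has_sum_infsum by blast
  have "((\<lambda>n. a (m, n)) has_sum (fps_nth C m * eval_fps W z ^ m)) UNIV" for m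
  proof (rule norm_summable_imp_has_sum)
    show "summable (\<lambda>n. norm (a (m, n)))"
      using has_sum_imp_sums[OF norm_rows] sums_summable by blast
    show "(\<lambda>n. a (m, n)) sums (fps_nth C m * eval_fps W z ^ m)"
      using sums_mult[OF row_sums[of z m], of "fps_nth C m"] by (simp add: a_def mult.assoc)
  qed
  then have "(\<lambda>m. fps_nth C m * eval_fps W z ^ m) sums S"
    by (intro has_sum_imp_sums has_sum_Sigma'[OF S])
  then have "S = eval_fps C (eval_fps W z)"
    by (simp add: eval_fps_def sums_iff)
  have columns: "((\<lambda>m. a (m, n)) has_sum (fps_nth (C oo W) n * z ^ n)) UNIV" for n
  proof (rule has_sum_finite_neutralI[of "{0..n}"])
    show "a (m, n) = 0" if "m \<in> UNIV - {0..n}" for m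
      using that startsby_zero_power_prefix[OF W0] by (simp add: a_def)
    show "fps_nth (C oo W) n * z ^ n = (\<Sum>m\<in>{0..n}. a (m, n))"
      by (simp add: a_def fps_compose_nth sum_distrib_right)
  qed auto
  have "((\<lambda>(n, m). a (m, n)) has_sum S) (UNIV \<times> UNIV)"
    using S has_sum_swap[where f = a and A = UNIV and B = UNIV] by (simp only: UNIV_Times_UNIV)
  from has_sum_Sigma'[OF this, of "\<lambda>n. fps_nth (C oo W) n * z ^ n"]
  have "(\<lambda>n. fps_nth (C oo W) n * z ^ n) sums S"
    using columns by (simp add: case_prod_beta has_sum_imp_sums)
  with \<open>S = _\<close> show ?thesis
    by simp
qed

lemma fps_nth_binomial_compose_denominator_excess:
  "fact n * fps_nth (fps_binomial a oo fps_denominator_excess \<beta>) n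
     = (\<Sum>m=0..n. (a gchoose m) * \<beta> ^ m *
          (\<Sum>k=0..m. of_nat (m choose k) * (-1) ^ (m - k) *
             of_nat (Stirling (n + k) k) / of_nat ((n + k) choose n)) :: 'a :: field_char_0)"
proof -
  have "fact n * fps_nth (fps_binomial a oo fps_denominator_excess \<beta>) n
      = (\<Sum>m=0..n. (a gchoose m) * \<beta> ^ m *
           (\<Sum>k=0..m. of_nat (m choose k) * (-1) ^ (m - k) * (fact n * fps_nth (fps_expm1_over_X ^ k) n)))"
    by (simp add: fps_compose_nth fps_nth_denominator_excess_power sum_distrib_left mult_ac)
  then show ?thesis
    by (simp only: fps_nth_expm1_over_X_power times_divide_eq_right)
qed

lemma eval_fps_binomial_real:
  fixes w :: real
  assumes "\<bar>w\<bar> < 1"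
  shows "eval_fps (fps_binomial a) w = (1 + w) powr a"
  using sums_unique[OF gen_binomial_real[OF assms]] by (simp add: eval_fps_def)

lemma sums_binomial_compose_denominator_excess:
  fixes \<beta> t :: real
  assumes "0 \<le> \<beta>"
  obtains \<rho> where "\<rho> > 0" and "\<And>z. z \<noteq> 0 \<Longrightarrow> \<bar>z\<bar> < \<rho> \<Longrightarrow>
    (\<lambda>n. fps_nth (fps_binomial (-t) oo fps_denominator_excess \<beta>) n * z ^ n) sums
      ((z / (\<beta> * (exp z - 1) + (1 - \<beta>) * z)) powr t)"
proof -
  define W where "W = fps_denominator_excess \<beta>"
  have "isCont (eval_fps W) 0"
    by (rule continuous_eval_fps) (simp add: W_def fps_conv_radius_denominator_excess)
  moreover have "eval_fps W 0 = 0"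
    by (simp add: W_def eval_fps_at_0 fps_nth_denominator_excess)
  ultimately obtain \<rho> where "\<rho> > 0" and small: "\<And>x. \<bar>x\<bar> < \<rho> \<Longrightarrow> \<bar>eval_fps W x\<bar> < 1"
    unfolding continuous_at_eps_delta by (metis dist_real_def diff_zero zero_less_one)
  moreover have "(\<lambda>n. fps_nth (fps_binomial (-t) oo W) n * z ^ n) sums
      ((z / (\<beta> * (exp z - 1) + (1 - \<beta>) * z)) powr t)" if "z \<noteq> 0" "\<bar>z\<bar> < \<rho>" for z
  proof -
    have "eval_fps W \<bar>z\<bar> < 1" "\<bar>eval_fps W z\<bar> < 1"
      using small[of z] small[of "\<bar>z\<bar>"] that by auto
    then have "(\<lambda>n. fps_nth (fps_binomial (-t) oo W) n * z ^ n) sums ((1 + eval_fps W z) powr (-t))"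
      using sums_fps_compose_nonneg[of W z "fps_binomial (-t)"] \<open>0 \<le> \<beta>\<close>
      by (simp add: W_def fps_nth_denominator_excess fps_conv_radius_denominator_excess
                    fps_conv_radius_binomial eval_fps_binomial_real)
    moreover have "1 + eval_fps W z > 0"
      using \<open>\<bar>eval_fps W z\<bar> < 1\<close> by linarith
    then have "z / (\<beta> * (exp z - 1) + (1 - \<beta>) * z) = inverse (1 + eval_fps W z)"
      using \<open>z \<noteq> 0\<close> by (simp add: W_def eval_fps_denominator_excess field_simps)
    ultimately show ?thesis
      by (simp add: powr_minus inverse_powr)
  qed
  ultimately show ?thesis
    using that by (auto simp: W_def)
qed

theorem corollary4p4:
  fixes t \<beta> :: real and B :: "nat \<Rightarrow> real \<Rightarrow> real" and n :: nat
  assumes "0 \<le> \<beta>" and "\<beta> \<le> 1"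
    and gen: "\<And>x. \<exists>\<delta>>0. \<forall>z::real. z \<noteq> 0 \<and> \<bar>z\<bar> < \<delta> \<longrightarrow>
        (\<lambda>k. B k x * z ^ k / fact k) sums
          ((z / (\<beta> * (exp z - 1) + (1 - \<beta>) * z)) powr t * exp (x * z))"
  shows "B n 0 = (\<Sum>m=0..n. ((- t) gchoose m) * \<beta> ^ m *
           (\<Sum>k=0..m. real (m choose k) * (-1) ^ (m - k) *
              real (Stirling (n + k) k) / real ((n + k) choose n)))"
proof -
  define c where "c = fps_nth (fps_binomial (-t) oo fps_denominator_excess \<beta>)"
  obtain \<delta> where "\<delta> > 0" and B_sums: "\<And>z. z \<noteq> 0 \<Longrightarrow> \<bar>z\<bar> < \<delta> \<Longrightarrow>
      (\<lambda>k. B k 0 * z ^ k / fact k) sums ((z / (\<beta> * (exp z - 1) + (1 - \<beta>) * z)) powr t)"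
    using gen[of 0] by auto
  obtain \<rho> where "\<rho> > 0" and c_sums: "\<And>z. z \<noteq> 0 \<Longrightarrow> \<bar>z\<bar> < \<rho> \<Longrightarrow>
      (\<lambda>k. c k * z ^ k) sums ((z / (\<beta> * (exp z - 1) + (1 - \<beta>) * z)) powr t)"
    using sums_binomial_compose_denominator_excess[OF \<open>0 \<le> \<beta>\<close>] unfolding c_def by blast
  have "B n 0 / fact n - c n = 0"
  proof (rule powser_eq_zero[of "min \<delta> \<rho>"])
    fix z :: real
    assume "z \<noteq> 0" "norm z < min \<delta> \<rho>"
    then show "(\<lambda>k. (B k 0 / fact k - c k) * z ^ k) sums 0"
      using sums_diff[OF B_sums[of z] c_sums[of z]] by (simp add: algebra_simps)
  qed (use \<open>\<delta> > 0\<close> \<open>\<rho> > 0\<close> in simp)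
  then have "B n 0 = fact n * c n"
    by (simp add: field_simps)
  also have "\<dots> = (\<Sum>m=0..n. ((- t) gchoose m) * \<beta> ^ m *
           (\<Sum>k=0..m. real (m choose k) * (-1) ^ (m - k) *
              real (Stirling (n + k) k) / real ((n + k) choose n)))"
    unfolding c_def by (rule fps_nth_binomial_compose_denominator_excess)
  finally show ?thesis .
qed

end
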